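(* Let $d_m\ge1$, let $n,k$ be integers with $k\ge\ell(d_m)$ and $n\ge k+\ell(d_m)+2d_m$, let $n'=n-k-\ell(d_m)-2d_m$, and let $\mathcal C_2(n,k,1,d_m)=\{0^k\vec u1^{d_m}\vec c1^{d_m}:\vec c\in\mathcal C_H\}$, where $\mathcal C_H\subseteq\{0,1\}^{n'}$ is any code all of whose words are $(d_m,k)$-WWL vectors. Then $\mathcal C_2(n,k,1,d_m)$ is prefix synchronized with the set $H=\{0^k\vec u\}$ and index $\rho=d_m$.
   Context: Binary alphabet; juxtaposition is concatenation; $(\vec x)_i^j=(x_i,\dots,x_j)$; $d_H$ is Hamming distance. A vector of length $m$ is a $(d,k)$-WWL vector if $m<k$ or every window of $k$ consecutive entries has Hamming weight at least $d$. $\ell(d)=d\lceil\log_2 d\rceil+d$ and $\vec u=1^d\vec u_0\cdots\vec u_{\lceil\log_2 d\rceil-1}\in\{0,1\}^{\ell(d)}$, where $\vec u_i$ is the length-$d$ prefix of $(1^{2^i}0^{2^i})^d$; here $d=d_m$. A code $\mathcal C\subseteq\{0,1\}^n$ is prefix synchronized with a set $H\subseteq\{0,1\}^m$ ($m\le n$) and index $\rho$ if for all $\vec a\in\mathcal C$, $\vec h\in H$ and $i\in[2,n]$, $d_H((\vec a\vec h)_i^{i+m-1},\vec h)\ge\rho$. *)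

theory Defs
  imports Complex_Main
begin

text \<open>Binary vectors are bool lists (True = 1, False = 0). Positions are 1-indexed in the
paper; the window (x)_i^j is  take (j-i+1) (drop (i-1) x).\<close>

definition hweight :: "bool list \<Rightarrow> nat" where
  "hweight x = length (filter id x)"

definition hdist :: "bool list \<Rightarrow> bool list \<Rightarrow> nat" where
  "hdist x y = card {i. i < length x \<and> x ! i \<noteq> y ! i}"

definition window :: "bool list \<Rightarrow> nat \<Rightarrow> nat \<Rightarrow> bool list" where
  "window x i j = take (Suc j - i) (drop (i - 1) x)"

definition wwl :: "nat \<Rightarrow> nat \<Rightarrow> bool list \<Rightarrow> bool" where
  "wwl d k x \<longleftrightarrow> length x < k \<or>
     (\<forall>j. j + k \<le> length x \<longrightarrow> hweight (take k (drop j x)) \<ge> d)"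

definition clog2 :: "nat \<Rightarrow> nat" where
  "clog2 d = nat \<lceil>log 2 (real d)\<rceil>"

definition ell :: "nat \<Rightarrow> nat" where
  "ell d = d * clog2 d + d"

definition uvec_i :: "nat \<Rightarrow> nat \<Rightarrow> bool list" where
  "uvec_i d i = take d (concat (replicate d (replicate (2^i) True @ replicate (2^i) False)))"

definition uvec :: "nat \<Rightarrow> bool list" where
  "uvec d = replicate d True @ concat (map (uvec_i d) [0..<clog2 d])"

definition prefix_sync :: "nat \<Rightarrow> nat \<Rightarrow> bool list set \<Rightarrow> bool list set \<Rightarrow> nat \<Rightarrow> bool" where
  "prefix_sync n m C H \<rho> \<longleftrightarrow>
     m \<le> n \<and> (\<forall>a\<in>C. length a = n) \<and> (\<forall>h\<in>H. length h = m) \<and>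
     (\<forall>a\<in>C. \<forall>h\<in>H. \<forall>i\<in>{2..n}. hdist (window (a @ h) i (i + m - 1)) h \<ge> \<rho>)"

definition code2 :: "nat \<Rightarrow> nat \<Rightarrow> bool list set \<Rightarrow> bool list set" where
  "code2 k dm CH = (\<lambda>c. replicate k False @ uvec dm @ replicate dm True @ c @ replicate dm True) ` CH"

end

theory Submission
  imports Defs
begin

text \<open>Write the received stream as \<open>a h\<close> with \<open>h = 0^k u\<close>. For a shift \<open>s\<close>, the window facing
\<open>h\<close> disagrees with it at every one facing \<open>0^k\<close> and wherever the part facing \<open>u\<close> disagrees
with \<open>u\<close>. Two properties of \<open>u\<close> drive everything: it has at least \<open>2d - 1\<close> ones (the prefix
\<open>1^d\<close>, plus at least \<open>2^i\<close> in block \<open>u_i\<close>), and for \<open>0 < t < d\<close> it differs from its own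
shift by \<open>t\<close> in at least \<open>d - t\<close> places, since writing \<open>t = 2^i (2q + 1)\<close> the shift inverts the
square wave \<open>u_i\<close>. A case split on \<open>s\<close> then finds \<open>d\<close> mismatches: ones of \<open>u\<close> or of a guard
block \<open>1^d\<close> under \<open>0^k\<close>; a self-overlap of \<open>u\<close> together with guard ones; a length-\<open>k\<close>
window of \<open>1^d c\<close>, which is still a WWL vector; or the ones of \<open>u\<close> falling on the trailing
\<open>0^k\<close>.\<close>

lemma card_Collect_shift: "card {j::nat. p \<le> j \<and> Q (j - p)} = card {i. Q i}"
proof -
  have "(+) p ` {i. Q i} = {j. p \<le> j \<and> Q (j - p)}"
    by (auto simp: image_iff) (metis le_add_diff_inverse)
  then show ?thesis by (metis card_image inj_on_add)
qed

definition ones :: "bool list \<Rightarrow> nat \<Rightarrow> nat \<Rightarrow> nat" where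
  "ones x a b = card {i. a \<le> i \<and> i < b \<and> x ! i}"

lemma ones_le: "ones x a b \<le> b - a"
proof -
  have "ones x a b \<le> card {a..<b}"
    unfolding ones_def by (intro card_mono) auto
  then show ?thesis by simp
qed

lemma ones_mono: "a \<le> a' \<Longrightarrow> b' \<le> b \<Longrightarrow> ones x a' b' \<le> ones x a b"
  unfolding ones_def by (intro card_mono) auto

lemma ones_split:
  assumes "a \<le> b" "b \<le> c"
  shows "ones x a c = ones x a b + ones x b c"
proof -
  have "{i. a \<le> i \<and> i < c \<and> x ! i}
      = {i. a \<le> i \<and> i < b \<and> x ! i} \<union> {i. b \<le> i \<and> i < c \<and> x ! i}"
    using assms by auto
  then show ?thesis unfolding ones_def by (simp add: card_Un_disjoint disjoint_iff)
qed

lemma ones_all: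
  assumes "\<And>i. a \<le> i \<Longrightarrow> i < b \<Longrightarrow> x ! i"
  shows "ones x a b = b - a"
proof -
  have "{i. a \<le> i \<and> i < b \<and> x ! i} = {a..<b}" using assms by auto
  then show ?thesis unfolding ones_def by simp
qed

lemma ones_replicate_True_append: "b \<le> n \<Longrightarrow> ones (replicate n True @ x) a b = b - a"
  by (intro ones_all) (simp add: nth_append)

lemma card_shifted_ones: "card {j. j < k \<and> x ! (s + j)} = ones x s (s + k)"
proof -
  have "{i. s \<le> i \<and> i < s + k \<and> x ! i} = {i. s \<le> i \<and> i - s < k \<and> x ! (s + (i - s))}"
    by auto
  then show ?thesis
    using card_Collect_shift[of s "\<lambda>j. j < k \<and> x ! (s + j)"] unfolding ones_def by simp
qed

lemma ones_shift:
  assumes "\<And>i. a \<le> i \<Longrightarrow> i < b \<Longrightarrow> x ! (p + i) = y ! i"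
  shows "ones x (p + a) (p + b) = ones y a b"
proof -
  have "{i. p + a \<le> i \<and> i < p + b \<and> x ! i}
      = {i. p \<le> i \<and> a \<le> i - p \<and> i - p < b \<and> y ! (i - p)}"
  proof (intro Collect_cong)
    fix i
    show "(p + a \<le> i \<and> i < p + b \<and> x ! i) = (p \<le> i \<and> a \<le> i - p \<and> i - p < b \<and> y ! (i - p))"
      using assms[of "i - p"] by auto
  qed
  then show ?thesis
    using card_Collect_shift[of p "\<lambda>i. a \<le> i \<and> i < b \<and> y ! i"] unfolding ones_def by simp
qed

lemma hweight_take_drop:
  assumes "j + k \<le> length x"
  shows "hweight (take k (drop j x)) = ones x j (j + k)"
proof -
  have "{i. i < length (take k (drop j x)) \<and> take k (drop j x) ! i} = {i. i < k \<and> x ! (j + i)}"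
    using assms by auto
  then show ?thesis
    unfolding hweight_def length_filter_conv_card by (simp add: card_shifted_ones)
qed

lemma hweight_eq_ones: "hweight x = ones x 0 (length x)"
  using hweight_take_drop[of 0 "length x" x] by simp

lemma hweight_append: "hweight (xs @ ys) = hweight xs + hweight ys"
  unfolding hweight_def by simp

lemma hweight_replicate_True: "hweight (replicate n True) = n"
  unfolding hweight_def by simp

lemma hweight_concat: "hweight (concat xss) = (\<Sum>xs\<leftarrow>xss. hweight xs)"
  by (induction xss) (simp_all add: hweight_append hweight_def)

lemma wwl_ones: "wwl d k x \<Longrightarrow> j + k \<le> length x \<Longrightarrow> d \<le> ones x j (j + k)"
  unfolding wwl_def by (auto simp: hweight_take_drop)

lemma wwlI: "(\<And>j. j + k \<le> length x \<Longrightarrow> d \<le> ones x j (j + k)) \<Longrightarrow> wwl d k x"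
  unfolding wwl_def by (simp add: hweight_take_drop)

lemma wwl_replicate_True_append:
  assumes wwl: "wwl d k c" and "k \<le> length c"
  shows "wwl d k (replicate d True @ c)"
proof (rule wwlI)
  fix j assume j: "j + k \<le> length (replicate d True @ c)"
  let ?x = "replicate d True @ c"
  have shift: "ones ?x (d + a) (d + b) = ones c a b" for a b
    by (rule ones_shift) (simp add: nth_append)
  have "d \<le> k"
    using wwl_ones[OF wwl, of 0] assms(2) ones_le[of c 0 k] by simp
  show "d \<le> ones ?x j (j + k)"
  proof (cases "d \<le> j")
    case True
    then show ?thesis
      using shift[of "j - d" "j - d + k"] wwl_ones[OF wwl, of "j - d"] j by simp
  next
    case False
    have "d \<le> ones c 0 k" using wwl_ones[OF wwl, of 0] assms(2) by simp
    also have "\<dots> = ones c 0 (j + k - d) + ones c (j + k - d) k"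
      using False \<open>d \<le> k\<close> by (intro ones_split) auto
    also have "\<dots> \<le> ones c 0 (j + k - d) + (d - j)"
      using ones_le[of c "j + k - d" k] False by simp
    finally have "j \<le> ones ?x d (j + k)"
      using shift[of 0 "j + k - d"] False \<open>d \<le> k\<close> by simp
    moreover have "ones ?x j d = d - j"
      by (rule ones_replicate_True_append) simp
    moreover have "ones ?x j (j + k) = ones ?x j d + ones ?x d (j + k)"
      using False \<open>d \<le> k\<close> by (intro ones_split) auto
    ultimately show ?thesis using False by simp
  qed
qed

definition mismatches :: "bool list \<Rightarrow> nat \<Rightarrow> bool list \<Rightarrow> nat" where
  "mismatches x s h = card {j. j < length h \<and> x ! (s + j) \<noteq> h ! j}"

lemma hdist_window:
  assumes "length h = m" "s + m \<le> length x"
  shows "hdist (take m (drop s x)) h = mismatches x s h"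
proof -
  have "{i. i < length (take m (drop s x)) \<and> take m (drop s x) ! i \<noteq> h ! i}
      = {j. j < length h \<and> x ! (s + j) \<noteq> h ! j}"
    using assms by auto
  then show ?thesis unfolding hdist_def mismatches_def by simp
qed

lemma window_eq_take_drop: "1 \<le> i \<Longrightarrow> window x i (i + m - 1) = take m (drop (i - 1) x)"
  unfolding window_def by (simp add: Suc_diff_le)

lemma mismatches_zeros_append:
  "mismatches x s (replicate k False @ u) = ones x s (s + k) + mismatches x (s + k) u"
proof -
  let ?Z = "{j. j < k \<and> x ! (s + j)}"
  let ?U = "{j. k \<le> j \<and> j - k < length u \<and> x ! (s + k + (j - k)) \<noteq> u ! (j - k)}"
  have "{j. j < length (replicate k False @ u) \<and> x ! (s + j) \<noteq> (replicate k False @ u) ! j}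
      = ?Z \<union> ?U"
    by (auto simp: nth_append)
  moreover have "?Z \<inter> ?U = {}" by auto
  moreover have "finite ?U" by (rule finite_subset[of _ "{..<k + length u}"]) auto
  moreover have "card ?U = mismatches x (s + k) u"
    using card_Collect_shift[of k "\<lambda>j. j < length u \<and> x ! (s + k + j) \<noteq> u ! j"]
    unfolding mismatches_def by simp
  ultimately show ?thesis
    unfolding mismatches_def card_shifted_ones[symmetric] by (simp add: card_Un_disjoint)
qed

lemma card_le_mismatches:
  "S \<subseteq> {j. j < length h \<and> x ! (s + j) \<noteq> h ! j} \<Longrightarrow> card S \<le> mismatches x s h"
  unfolding mismatches_def by (intro card_mono) auto

lemma mod_two_power_Suc_less_iff: "(y::nat) mod 2 ^ Suc i < 2 ^ i \<longleftrightarrow> even (y div 2 ^ i)"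
proof -
  have "y mod 2 ^ Suc i = 2 ^ i * (y div 2 ^ i mod 2) + y mod 2 ^ i"
    using mod_mult2_eq[of y "2 ^ i" 2] by (simp add: mult.commute)
  moreover have "y mod 2 ^ i < 2 ^ i" by simp
  ultimately show ?thesis
    by (cases "even (y div 2 ^ i)") (auto simp: odd_iff_mod_2_eq_one even_iff_mod_2_eq_zero)
qed

lemma two_power_times_odd: "0 < (t::nat) \<Longrightarrow> \<exists>i q. t = 2 ^ i * (2 * q + 1)"
proof (induction t rule: less_induct)
  case (less t)
  show ?case
  proof (cases "even t")
    case True
    then obtain t' where t': "t = 2 * t'" by blast
    with less.prems obtain i q where "t' = 2 ^ i * (2 * q + 1)" using less.IH[of t'] by auto
    then have "t = 2 ^ Suc i * (2 * q + 1)" using t' by simp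
    then show ?thesis by blast
  next
    case False
    then obtain q where "t = 2 ^ 0 * (2 * q + 1)" by (auto elim: oddE)
    then show ?thesis by blast
  qed
qed

lemma length_concat_equal_length:
  "\<forall>xs\<in>set xss. length xs = n \<Longrightarrow> length (concat xss) = n * length xss"
  by (induction xss) auto

lemma nth_concat_equal_length:
  assumes "\<forall>xs\<in>set xss. length xs = n" "i < length xss" "y < n"
  shows "concat xss ! (n * i + y) = xss ! i ! y"
  using assms
proof (induction xss arbitrary: i)
  case Nil
  then show ?case by simp
next
  case (Cons xs xss)
  show ?case
  proof (cases i)
    case 0
    then show ?thesis using Cons.prems by (simp add: nth_append)
  next
    case (Suc i')
    then have "concat (xs # xss) ! (n * i + y) = concat xss ! (n * i' + y)"
      using Cons.prems by (simp add: nth_append)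
    then show ?thesis using Cons Suc by simp
  qed
qed

lemma length_uvec_i: "length (uvec_i d i) = d"
proof -
  have "d \<le> d * 2 ^ Suc i" by simp
  then show ?thesis unfolding uvec_i_def by (simp add: length_concat sum_list_replicate mult_2)
qed

lemma uvec_i_nth:
  assumes "y < d"
  shows "uvec_i d i ! y \<longleftrightarrow> even (y div 2 ^ i)"
proof -
  define P where "P = replicate (2 ^ i) True @ replicate (2 ^ i) False"
  have len_P: "length P = 2 ^ Suc i" unfolding P_def by simp
  have "y div 2 ^ Suc i < d"
    using assms by (meson div_le_dividend le_less_trans)
  then have "concat (replicate d P) ! (2 ^ Suc i * (y div 2 ^ Suc i) + y mod 2 ^ Suc i)
      = P ! (y mod 2 ^ Suc i)"
    by (intro trans[OF nth_concat_equal_length]) (auto simp: len_P)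
  then have "uvec_i d i ! y = P ! (y mod 2 ^ Suc i)"
    unfolding uvec_i_def P_def[symmetric] using assms by simp
  also have "\<dots> \<longleftrightarrow> y mod 2 ^ Suc i < 2 ^ i"
  proof -
    have "y mod 2 ^ Suc i < 2 * 2 ^ i"
      by (metis mod_less_divisor power_Suc zero_less_numeral zero_less_power)
    then have "y mod 2 ^ Suc i - 2 ^ i < 2 ^ i" by linarith
    then show ?thesis unfolding P_def by (simp add: nth_append)
  qed
  finally show ?thesis by (simp only: mod_two_power_Suc_less_iff)
qed

lemma length_uvec: "length (uvec d) = ell d"
  using length_concat_equal_length[of "map (uvec_i d) [0..<clog2 d]" d]
  unfolding uvec_def ell_def by (simp add: length_uvec_i)

lemma d_le_ell: "d \<le> ell d"
  unfolding ell_def by simp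

lemma uvec_nth_block:
  assumes "i < clog2 d" "y < d"
  shows "uvec d ! (d + d * i + y) \<longleftrightarrow> even (y div 2 ^ i)"
proof -
  have "concat (map (uvec_i d) [0..<clog2 d]) ! (d * i + y) = uvec_i d i ! y"
    using assms by (subst nth_concat_equal_length[where n=d]) (auto simp: length_uvec_i)
  then show ?thesis
    unfolding uvec_def using assms by (simp add: nth_append uvec_i_nth add.assoc)
qed

lemma le_two_power_clog2:
  assumes "1 \<le> d"
  shows "d \<le> 2 ^ clog2 d"
proof -
  have "log 2 (real d) \<le> real (clog2 d)"
    unfolding clog2_def using assms by linarith
  then have "real d \<le> 2 powr real (clog2 d)"
    using assms by (simp add: log_le_iff)
  then show ?thesis
    by (simp add: powr_realpow)
qed

lemma two_power_less_if_less_clog2: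
  assumes "1 \<le> d" "i < clog2 d"
  shows "2 ^ i < d"
proof -
  have "int i < \<lceil>log 2 (real d)\<rceil>"
    using assms unfolding clog2_def by linarith
  then have "real i < log 2 (real d)"
    by (simp add: less_ceiling_iff)
  with assms(1) have "2 powr real i < real d"
    by (simp add: less_log_iff)
  then show ?thesis
    by (simp add: powr_realpow)
qed

lemma hweight_uvec_i:
  assumes "2 ^ i < d"
  shows "2 ^ i \<le> hweight (uvec_i d i)"
proof -
  have "ones (uvec_i d i) 0 (2 ^ i) = 2 ^ i"
    using assms by (subst ones_all) (auto simp: uvec_i_nth)
  moreover have "ones (uvec_i d i) 0 (2 ^ i) \<le> ones (uvec_i d i) 0 d"
    using assms by (intro ones_mono) auto
  ultimately show ?thesis by (simp add: hweight_eq_ones length_uvec_i)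
qed

lemma hweight_uvec:
  assumes "1 \<le> d"
  shows "2 * d - 1 \<le> hweight (uvec d)"
proof -
  let ?L = "clog2 d"
  have "2 * d - 1 \<le> d + (2 ^ ?L - 1)"
    using le_two_power_clog2[OF assms] by linarith
  also have "2 ^ ?L - 1 = (\<Sum>i\<in>{i. i < ?L}. 2 ^ i :: nat)"
    by (rule mask_eq_sum_exp)
  also have "\<dots> \<le> (\<Sum>i\<in>{i. i < ?L}. hweight (uvec_i d i))"
    using assms by (intro sum_mono hweight_uvec_i two_power_less_if_less_clog2) auto
  also have "d + \<dots> = hweight (uvec d)"
  proof -
    have "hweight (uvec d) = d + (\<Sum>i\<leftarrow>[0..<?L]. hweight (uvec_i d i))"
      unfolding uvec_def by (simp add: hweight_append hweight_concat hweight_replicate_True comp_def)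
    then show ?thesis
      by (simp add: sum_set_upt_conv_sum_list_nat[symmetric] atLeast0LessThan lessThan_def)
  qed
  finally show ?thesis by simp
qed

lemma uvec_shift_mismatches:
  assumes "0 < t" "t < d"
  shows "d - t \<le> card {j. j + t < ell d \<and> uvec d ! j \<noteq> uvec d ! (j + t)}"
proof -
  obtain i q where t: "t = 2 ^ i * (2 * q + 1)"
    using two_power_times_odd assms(1) by blast
  have "2 ^ i \<le> t" unfolding t by simp
  also have "t < d" by (rule assms(2))
  also have "d \<le> 2 ^ clog2 d" using le_two_power_clog2 assms by simp
  finally have "(2::nat) ^ i < 2 ^ clog2 d" .
  then have i: "i < clog2 d" by simp
  let ?p = "d + d * i"
  have "d * Suc i \<le> d * clog2 d" using i by (intro mult_le_mono2) simp
  then have block_end: "?p + d \<le> ell d" unfolding ell_def by simp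
  have "{j. ?p \<le> j \<and> j - ?p < d - t} \<subseteq> {j. j + t < ell d \<and> uvec d ! j \<noteq> uvec d ! (j + t)}"
  proof
    fix j assume "j \<in> {j. ?p \<le> j \<and> j - ?p < d - t}"
    then obtain y where j: "j = ?p + y" and y: "y + t < d"
      by (metis (no_types, lifting) le_add_diff_inverse less_diff_conv mem_Collect_eq)
    \<comment> \<open>an odd multiple of \<open>2^i\<close> inverts the square wave \<open>u_i\<close>\<close>
    have "(y + t) div 2 ^ i = y div 2 ^ i + (2 * q + 1)"
      unfolding t using div_mult_self2[of "2 ^ i" y "2 * q + 1"] by simp
    then have "uvec d ! (?p + y) \<noteq> uvec d ! (?p + (y + t))"
      using i y by (simp add: uvec_nth_block)
    then show "j \<in> {j. j + t < ell d \<and> uvec d ! j \<noteq> uvec d ! (j + t)}"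
      using j y block_end by (simp add: add.assoc)
  qed
  then have "card {j. ?p \<le> j \<and> j - ?p < d - t}
      \<le> card {j. j + t < ell d \<and> uvec d ! j \<noteq> uvec d ! (j + t)}"
    by (intro card_mono) (auto intro: finite_subset[of _ "{..<ell d}"])
  moreover have "card {j. ?p \<le> j \<and> j - ?p < d - t} = d - t"
    using card_Collect_shift[of ?p "\<lambda>y. y < d - t"] by simp
  ultimately show ?thesis by simp
qed

definition marker :: "nat \<Rightarrow> nat \<Rightarrow> bool list" where
  "marker k d = replicate k False @ uvec d"

definition codeword :: "nat \<Rightarrow> nat \<Rightarrow> bool list \<Rightarrow> bool list" where
  "codeword k d c = marker k d @ replicate d True @ c @ replicate d True"

lemma length_marker: "length (marker k d) = k + ell d"
  unfolding marker_def by (simp add: length_uvec)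

lemma length_codeword: "length (codeword k d c) = k + ell d + 2 * d + length c"
  unfolding codeword_def by (simp add: length_marker)

lemma code2_eq_image_codeword: "code2 k d CH = codeword k d ` CH"
  unfolding code2_def codeword_def marker_def by simp

context
  fixes d k :: nat and c :: "bool list"
begin

text \<open>The window \<open>(a h)_i^{i+m-1}\<close> of the paper is the shift \<open>s = i - 1\<close> of the marker
  against \<open>stream\<close>.\<close>

abbreviation stream :: "bool list" where
  "stream \<equiv> codeword k d c @ marker k d"

abbreviation code_len :: nat where
  "code_len \<equiv> k + ell d + 2 * d + length c"

lemma stream_nth_uvec: "i < ell d \<Longrightarrow> stream ! (k + i) = uvec d ! i"
  unfolding codeword_def marker_def by (simp add: nth_append_left nth_append_right length_uvec)

lemma stream_nth_padded:
  "i < d + length c \<Longrightarrow> stream ! (k + ell d + i) = (replicate d True @ c) ! i"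
  unfolding codeword_def marker_def using nth_append_left[of i "replicate d True @ c"]
  by (simp add: nth_append_right length_uvec)

lemma stream_nth_last_block: "code_len - d \<le> i \<Longrightarrow> i < code_len \<Longrightarrow> stream ! i"
  unfolding codeword_def marker_def by (simp add: nth_append_left nth_append_right length_uvec)

lemma stream_nth_trailing_zeros: "code_len \<le> i \<Longrightarrow> i < code_len + k \<Longrightarrow> \<not> stream ! i"
  unfolding codeword_def marker_def by (simp add: nth_append_left nth_append_right length_uvec)

lemma stream_nth_trailing_uvec: "i < ell d \<Longrightarrow> stream ! (code_len + k + i) = uvec d ! i"
  unfolding codeword_def marker_def by (simp add: nth_append_left nth_append_right length_uvec)

lemma mismatches_stream:
  "mismatches stream s (marker k d) = ones stream s (s + k) + mismatches stream (s + k) (uvec d)"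
  unfolding marker_def by (rule mismatches_zeros_append)

lemma ones_stream_uvec_prefix: "b \<le> d \<Longrightarrow> ones stream (k + a) (k + b) = b - a"
  using d_le_ell[of d] ones_shift[of a b stream k "uvec d"] ones_replicate_True_append[of b d]
  by (simp add: stream_nth_uvec uvec_def)

lemma ones_stream_first_block: "b \<le> d \<Longrightarrow> ones stream (k + ell d + a) (k + ell d + b) = b - a"
  using ones_shift[of a b stream "k + ell d" "replicate d True @ c"] ones_replicate_True_append[of b d]
  by (simp add: stream_nth_padded)

lemma ones_stream_last_block: "t \<le> d \<Longrightarrow> ones stream (code_len - t) code_len = t"
  by (subst ones_all) (auto intro: stream_nth_last_block)

lemma self_shift_le_mismatches:
  "card {j. j + s < ell d \<and> uvec d ! j \<noteq> uvec d ! (j + s)} \<le> mismatches stream (s + k) (uvec d)"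
proof (intro card_le_mismatches subsetI)
  fix j assume "j \<in> {j. j + s < ell d \<and> uvec d ! j \<noteq> uvec d ! (j + s)}"
  moreover have "stream ! (s + k + j) = uvec d ! (j + s)" if "j + s < ell d"
    using stream_nth_uvec[OF that] by (simp add: ac_simps)
  ultimately show "j \<in> {j. j < length (uvec d) \<and> stream ! (s + k + j) \<noteq> uvec d ! j}"
    by (auto simp: length_uvec)
qed

lemma trailing_shift_le_mismatches:
  assumes "t \<le> code_len"
  shows "card {j. j + t < ell d \<and> uvec d ! j \<noteq> uvec d ! (j + t)}
    \<le> mismatches stream (code_len - t + k) (uvec d)"
proof -
  let ?S = "{j. t \<le> j \<and> j - t + t < ell d \<and> uvec d ! (j - t) \<noteq> uvec d ! (j - t + t)}"
  have "?S \<subseteq> {j. j < length (uvec d) \<and> stream ! (code_len - t + k + j) \<noteq> uvec d ! j}"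
  proof
    fix j assume j: "j \<in> ?S"
    then have "stream ! (code_len - t + k + j) = uvec d ! (j - t)"
      using assms stream_nth_trailing_uvec[of "j - t"] by (simp add: ac_simps)
    then show "j \<in> {j. j < length (uvec d) \<and> stream ! (code_len - t + k + j) \<noteq> uvec d ! j}"
      using j by (auto simp: length_uvec)
  qed
  then have "card ?S \<le> mismatches stream (code_len - t + k) (uvec d)"
    by (rule card_le_mismatches)
  then show ?thesis
    using card_Collect_shift[of t "\<lambda>j. j + t < ell d \<and> uvec d ! j \<noteq> uvec d ! (j + t)"] by simp
qed

context
  assumes d_pos: "1 \<le> d" and ell_le_k: "ell d \<le> k"
begin

lemma trailing_zeros_le_mismatches:
  assumes "s + k \<le> code_len"
  shows "2 * d - 1 - (code_len - (s + k)) \<le> mismatches stream (s + k) (uvec d)"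
proof -
  let ?r = "code_len - (s + k)"
  have "2 * d - 1 \<le> ones (uvec d) 0 (ell d)"
    using hweight_uvec[OF d_pos] by (simp add: hweight_eq_ones length_uvec)
  also have "\<dots> \<le> ?r + ones (uvec d) ?r (ell d)"
    using ones_le[of "uvec d" 0 ?r] ones_mono[of 0 0 "ell d" ?r "uvec d"]
      ones_split[of 0 ?r "ell d" "uvec d"] by (cases "?r \<le> ell d") auto
  also have "ones (uvec d) ?r (ell d) \<le> mismatches stream (s + k) (uvec d)"
    unfolding ones_def
  proof (intro card_le_mismatches subsetI)
    fix j assume j: "j \<in> {j. ?r \<le> j \<and> j < ell d \<and> uvec d ! j}"
    then have "\<not> stream ! (s + k + j)"
      using assms ell_le_k by (intro stream_nth_trailing_zeros) auto
    then show "j \<in> {j. j < length (uvec d) \<and> stream ! (s + k + j) \<noteq> uvec d ! j}"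
      using j by (auto simp: length_uvec)
  qed
  finally show ?thesis by simp
qed

lemma d_le_k: "d \<le> k"
  using d_le_ell[of d] ell_le_k by linarith

lemma mismatches_head_shift:
  assumes "0 < s" "s < d"
  shows "d \<le> mismatches stream s (marker k d)"
proof -
  have "s \<le> ones stream s (s + k)"
    using ones_stream_uvec_prefix[of s 0] ones_mono[of s k "k + s" "s + k" stream] assms d_le_k by simp
  moreover have "d - s \<le> mismatches stream (s + k) (uvec d)"
    using uvec_shift_mismatches[OF assms] self_shift_le_mismatches[of s] by simp
  ultimately show ?thesis unfolding mismatches_stream by linarith
qed

lemma mismatches_prefix_under_zeros:
  assumes "d \<le> s" "s \<le> k"
  shows "d \<le> mismatches stream s (marker k d)"
  using ones_stream_uvec_prefix[of d 0] ones_mono[of s k "k + d" "s + k" stream] assms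
  unfolding mismatches_stream by simp

lemma mismatches_uvec_under_zeros:
  assumes "k < s" "s < k + ell d"
  shows "d \<le> mismatches stream s (marker k d)"
proof -
  define t where "t = s - k"
  have "d - t \<le> ones stream s (k + ell d)"
    using ones_stream_uvec_prefix[of d t] ones_mono[of s s "k + d" "k + ell d" stream] d_le_ell[of d] assms
    unfolding t_def by simp
  moreover have "min t d \<le> ones stream (k + ell d) (s + k)"
    using ones_stream_first_block[of "min t d" 0] ell_le_k assms
      ones_mono[of "k + ell d" "k + ell d" "k + ell d + min t d" "s + k" stream]
    unfolding t_def by simp
  moreover have "ones stream s (s + k) = ones stream s (k + ell d) + ones stream (k + ell d) (s + k)"
    using assms ell_le_k by (intro ones_split) auto
  ultimately show ?thesis unfolding mismatches_stream by (simp add: min_def split: if_splits)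
qed

text \<open>Here \<open>c\<close> is shorter than \<open>k\<close>, so its WWL property says nothing; the missing
  mismatches come from the ones of \<open>u\<close> that face the trailing \<open>0^k\<close>.\<close>

lemma mismatches_short_payload:
  assumes "k + ell d \<le> s" "s + k \<le> code_len" "length c < k"
  shows "d \<le> mismatches stream s (marker k d)"
proof -
  define p where "p = s - (k + ell d)"
  have "d - p \<le> ones stream s (s + k)"
    using ones_stream_first_block[of d p] ones_mono[of s s "k + ell d + d" "s + k" stream] assms ell_le_k d_le_k
    unfolding p_def by simp
  moreover have "p \<le> mismatches stream (s + k) (uvec d)"
    using trailing_zeros_le_mismatches[OF assms(2)] assms unfolding p_def by linarith
  ultimately show ?thesis unfolding mismatches_stream by linarith
qed

lemma mismatches_wwl_payload:
  assumes "wwl d k c" "k \<le> length c" "k + ell d \<le> s" "s + k + d \<le> code_len"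
  shows "d \<le> mismatches stream s (marker k d)"
proof -
  define p where "p = s - (k + ell d)"
  have "d \<le> ones (replicate d True @ c) p (p + k)"
    using wwl_ones[OF wwl_replicate_True_append[OF assms(1,2)], of p] assms unfolding p_def by simp
  also have "\<dots> = ones stream (k + ell d + p) (k + ell d + (p + k))"
    using assms unfolding p_def by (intro ones_shift[symmetric]) (simp add: stream_nth_padded)
  also have "\<dots> = ones stream s (s + k)"
    using assms unfolding p_def by (simp add: add.commute)
  finally show ?thesis unfolding mismatches_stream by linarith
qed

lemma mismatches_trailing_zeros:
  assumes "s + k \<le> code_len" "code_len < s + k + d"
  shows "d \<le> mismatches stream s (marker k d)"
  using trailing_zeros_le_mismatches[OF assms(1)] assms unfolding mismatches_stream by linarith

lemma mismatches_last_block_under_zeros: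
  assumes "code_len < s + k" "s + d \<le> code_len"
  shows "d \<le> mismatches stream s (marker k d)"
  using ones_stream_last_block[of d] ones_mono[of s "code_len - d" code_len "s + k" stream] assms
  unfolding mismatches_stream by simp

lemma mismatches_tail_shift:
  assumes "code_len < s + d" "s < code_len"
  shows "d \<le> mismatches stream s (marker k d)"
proof -
  define t where "t = code_len - s"
  have t: "0 < t" "t < d" "s = code_len - t" using assms unfolding t_def by auto
  have "t \<le> ones stream s (s + k)"
    using ones_stream_last_block[of t] ones_mono[of s "code_len - t" code_len "s + k" stream] t d_le_k by simp
  moreover have "d - t \<le> mismatches stream (s + k) (uvec d)"
    using uvec_shift_mismatches[OF t(1,2)] trailing_shift_le_mismatches[of t] t by simp
  ultimately show ?thesis unfolding mismatches_stream by linarith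
qed

lemma mismatches_stream_ge:
  assumes "wwl d k c" "0 < s" "s < code_len"
  shows "d \<le> mismatches stream s (marker k d)"
proof -
  consider "s < d" | "d \<le> s" "s \<le> k" | "k < s" "s < k + ell d"
    | "k + ell d \<le> s" "s + k \<le> code_len" "length c < k"
    | "k + ell d \<le> s" "s + k + d \<le> code_len" "k \<le> length c"
    | "s + k \<le> code_len" "code_len < s + k + d"
    | "code_len < s + k" "s + d \<le> code_len"
    | "code_len < s + d"
    by linarith
  then show ?thesis
    by cases (use assms mismatches_head_shift mismatches_prefix_under_zeros mismatches_uvec_under_zeros
        mismatches_short_payload mismatches_wwl_payload mismatches_trailing_zeros
        mismatches_last_block_under_zeros mismatches_tail_shift in auto)
qed

end

end

theorem theorem9:
  fixes dm n k :: nat and CH :: "bool list set"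
  assumes "dm \<ge> 1"
    and "k \<ge> ell dm"
    and "n \<ge> k + ell dm + 2 * dm"
    and "\<forall>c\<in>CH. length c = n - k - ell dm - 2 * dm"
    and "\<forall>c\<in>CH. wwl dm k c"
  shows "prefix_sync n (k + ell dm) (code2 k dm CH) {replicate k False @ uvec dm} dm"
proof -
  have length_code: "length (codeword k dm c) = n" if "c \<in> CH" for c
    using that assms(3,4) by (simp add: length_codeword)
  have "dm \<le> hdist (window (codeword k dm c @ marker k dm) i (i + (k + ell dm) - 1)) (marker k dm)"
    if "c \<in> CH" "i \<in> {2..n}" for c i
  proof -
    let ?w = "codeword k dm c @ marker k dm"
    have "window ?w i (i + (k + ell dm) - 1) = take (k + ell dm) (drop (i - 1) ?w)"
      using that by (intro window_eq_take_drop) simp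
    moreover have "hdist (take (k + ell dm) (drop (i - 1) ?w)) (marker k dm)
        = mismatches ?w (i - 1) (marker k dm)"
      using length_code that by (intro hdist_window) (auto simp: length_marker)
    moreover have "dm \<le> mismatches ?w (i - 1) (marker k dm)"
      using that assms(3,4,5) by (intro mismatches_stream_ge[OF assms(1,2)]) auto
    ultimately show ?thesis by (simp only:)
  qed
  then show ?thesis
    using assms(3) length_code unfolding prefix_sync_def code2_eq_image_codeword marker_def[symmetric]
    by (auto simp: length_marker)
qed

end
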